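(* Let $n\ge 1$ and $d\ge 0$. Consider the set $\mathcal B_{n,d}$ of all directed multigraphs with output pair $H=(V,E,(a,b))$, taken up to isomorphism, such that $|V|\le \min\{n,2+2d\}$, $|E|\le d$, and no node of $V\setminus\{a,b\}$ is isolated. Then $\{P_H : H\in\mathcal B_{n,d}\}$ is a basis of the real vector space of all $S_n$-equivariant polynomial maps $P:\mathbb R^{n\times n}\to\mathbb R^{n\times n}$ of degree at most $d$.
   Context: A directed multigraph with output pair is $H=(V,E,(a,b))$ with $V=[m]=\{1,\dots,m\}$, $E$ a finite multiset of ordered pairs $(r,s)\in V\times V$ (parallel edges and self-loops allowed), and $a,b\in V$ a distinguished, not necessarily distinct, pair called the red edge (it is not an element of $E$). A node is isolated if no edge of $E$ is incident to it. Two such multigraphs are isomorphic if there is a bijection of node sets carrying the edge multiset onto the edge multiset (with multiplicities) and the red pair $(a,b)$ onto the red pair. For $X\in\mathbb R^{n\times n}$, $P_H(X)\in\mathbb R^{n\times n}$ is defined by $P_H(X)_{i_a,i_b}=\sum_{j\in[n]^m,\ j_a=i_a,\ j_b=i_b}\ \prod_{(r,s)\in E}X_{j_r,j_s}$ (product over $E$ with multiplicity; empty product $=1$); if $a=b$ this formula defines the diagonal entries and all off-diagonal entries of $P_H(X)$ are $0$. The symmetric group $S_n$ acts on $\mathbb R^{n\times n}$ by $(g\cdot X)_{ij}=X_{g^{-1}(i),g^{-1}(j)}$. A polynomial map $P:\mathbb R^{n\times n}\to\mathbb R^{n\times n}$ (each entry a polynomial in the entries of $X$) is equivariant if $P(g\cdot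 X)=g\cdot P(X)$ for all $g\in S_n$ and all $X$. *)

theory Defs
  imports Complex_Main "HOL-Library.Multiset" "HOL-Library.FuncSet"
          "HOL-Combinatorics.Permutations"
begin

(* n x n real matrices are represented as functions nat => nat => real;
   only the entries with indices in {0..<n} are meaningful. *)
type_synonym mat = "nat \<Rightarrow> nat \<Rightarrow> real"

(* A directed multigraph with output pair: (m, E, a, b) with node set {1..m},
   edge multiset E, red pair (a,b). *)
type_synonym mgraph = "nat \<times> (nat \<times> nat) multiset \<times> nat \<times> nat"

definition nodes :: "mgraph \<Rightarrow> nat set" where
  "nodes H = {1..fst H}"

definition edges :: "mgraph \<Rightarrow> (nat \<times> nat) multiset" where
  "edges H = fst (snd H)"

definition out_a :: "mgraph \<Rightarrow> nat" where
  "out_a H = fst (snd (snd H))"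

definition out_b :: "mgraph \<Rightarrow> nat" where
  "out_b H = snd (snd (snd H))"

definition wf_mgraph :: "mgraph \<Rightarrow> bool" where
  "wf_mgraph H \<longleftrightarrow> out_a H \<in> nodes H \<and> out_b H \<in> nodes H \<and>
     (\<forall>e \<in># edges H. fst e \<in> nodes H \<and> snd e \<in> nodes H)"

definition isolated :: "mgraph \<Rightarrow> nat \<Rightarrow> bool" where
  "isolated H v \<longleftrightarrow> \<not> (\<exists>e \<in># edges H. fst e = v \<or> snd e = v)"

definition mgraph_iso :: "mgraph \<Rightarrow> mgraph \<Rightarrow> bool" where
  "mgraph_iso H H' \<longleftrightarrow> (\<exists>f. bij_betw f (nodes H) (nodes H') \<and>
      image_mset (map_prod f f) (edges H) = edges H' \<and>
      f (out_a H) = out_a H' \<and> f (out_b H) = out_b H')"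

definition iso_class :: "mgraph \<Rightarrow> mgraph set" where
  "iso_class H = {H'. wf_mgraph H' \<and> mgraph_iso H H'}"

definition admissible :: "nat \<Rightarrow> nat \<Rightarrow> mgraph \<Rightarrow> bool" where
  "admissible n d H \<longleftrightarrow> wf_mgraph H \<and> card (nodes H) \<le> min n (2 + 2 * d) \<and>
     size (edges H) \<le> d \<and>
     (\<forall>v \<in> nodes H - {out_a H, out_b H}. \<not> isolated H v)"

definition Bclasses :: "nat \<Rightarrow> nat \<Rightarrow> mgraph set set" where
  "Bclasses n d = iso_class ` {H. admissible n d H}"

(* P_H; matrix indices are 0..<n, entries outside are 0 *)
definition PH :: "nat \<Rightarrow> mgraph \<Rightarrow> mat \<Rightarrow> mat" where
  "PH n H X i k =
     (if i < n \<and> k < n \<and> (out_a H = out_b H \<longrightarrow> i = k) then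
        (\<Sum>j \<in> {j \<in> PiE (nodes H) (\<lambda>_. {..<n}). j (out_a H) = i \<and> j (out_b H) = k}.
           prod_mset (image_mset (\<lambda>(r, s). X (j r) (j s)) (edges H)))
      else 0)"

definition PC :: "nat \<Rightarrow> mgraph set \<Rightarrow> mat \<Rightarrow> mat" where
  "PC n C = PH n (SOME H. H \<in> C)"

definition monomial_exps :: "nat \<Rightarrow> nat \<Rightarrow> (nat \<times> nat \<Rightarrow> nat) set" where
  "monomial_exps n d = {\<alpha>. (\<forall>p. p \<notin> {..<n} \<times> {..<n} \<longrightarrow> \<alpha> p = 0) \<and>
                    (\<Sum>p \<in> {..<n} \<times> {..<n}. \<alpha> p) \<le> d}"

definition mono :: "nat \<Rightarrow> (nat \<times> nat \<Rightarrow> nat) \<Rightarrow> mat \<Rightarrow> real" where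
  "mono n \<alpha> X = (\<Prod>p \<in> {..<n} \<times> {..<n}. X (fst p) (snd p) ^ \<alpha> p)"

definition poly_map :: "nat \<Rightarrow> nat \<Rightarrow> (mat \<Rightarrow> mat) \<Rightarrow> bool" where
  "poly_map n d P \<longleftrightarrow>
     (\<forall>X i k. \<not> (i < n \<and> k < n) \<longrightarrow> P X i k = 0) \<and>
     (\<forall>i<n. \<forall>k<n. \<exists>c. \<forall>X. P X i k = (\<Sum>\<alpha> \<in> monomial_exps n d. c \<alpha> * mono n \<alpha> X))"

definition act :: "(nat \<Rightarrow> nat) \<Rightarrow> mat \<Rightarrow> mat" where
  "act g X = (\<lambda>i k. X (inv g i) (inv g k))"

definition equivariant :: "nat \<Rightarrow> (mat \<Rightarrow> mat) \<Rightarrow> bool" where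
  "equivariant n P \<longleftrightarrow> (\<forall>g X. g permutes {..<n} \<longrightarrow> P (act g X) = act g (P X))"

end

theory Submission
  imports Defs
begin

text \<open>A polynomial map of degree at most \<open>d\<close> is a coefficient function on slots \<open>(i, k, A)\<close>
  (an output entry and a monomial, a multiset of matrix positions), and it is equivariant iff
  the coefficients are invariant under relabelling slots by permutations of \<open>{..<n}\<close>. The
  coefficient of \<open>P\<^sub>H\<close> at a slot counts the labellings of the nodes of \<open>H\<close> producing it.
  Every slot is produced by an injective labelling of an admissible graph, obtained by
  enumerating the support of the slot; for such a graph, \<open>P\<^sub>H\<close> has no coefficients on slots of
  larger support, and on slots of the same support only on the orbit of the given slot. This
  triangularity gives spanning (induction on the support size, subtracting orbit averages of
  these \<open>P\<^sub>H\<close>) and independence (evaluate at an injective labelling of a graph with the most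
  nodes among those with nonzero coefficient).\<close>

section \<open>Linear independence of monomials\<close>

lemma filter_mset_neq_plus_replicate:
  "filter_mset (\<lambda>u. u \<noteq> v) A + replicate_mset (count A v) v = A"
  by (rule multiset_eqI) auto

lemma prod_mset_image_split_count:
  "prod_mset (image_mset x A) =
     prod_mset (image_mset x (filter_mset (\<lambda>u. u \<noteq> v) A)) * x v ^ count A v"
proof -
  have "prod_mset (image_mset x A) =
      prod_mset (image_mset x (filter_mset (\<lambda>u. u \<noteq> v) A + replicate_mset (count A v) v))"
    by (simp only: filter_mset_neq_plus_replicate)
  then show ?thesis
    by (simp only: image_mset_union prod_mset.union image_replicate_mset prod_mset_replicate_mset)
qed

lemma sum_monomials_by_degree:
  fixes c :: "'a multiset \<Rightarrow> 'b :: comm_ring_1"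
  assumes "finite Ms" and "\<And>A. A \<in> Ms \<Longrightarrow> count A v \<le> K"
  shows "(\<Sum>A\<in>Ms. c A * prod_mset (image_mset x A)) =
    (\<Sum>k\<le>K. (\<Sum>A\<in>{A\<in>Ms. count A v = k}.
        c A * prod_mset (image_mset x (filter_mset (\<lambda>u. u \<noteq> v) A))) * x v ^ k)"
proof -
  have split: "c A * prod_mset (image_mset x A) =
      c A * prod_mset (image_mset x (filter_mset (\<lambda>u. u \<noteq> v) A)) * x v ^ k"
    if "count A v = k" for A k
    using prod_mset_image_split_count[of x A v] that by (simp add: mult.assoc)
  have "(\<Sum>A\<in>Ms. c A * prod_mset (image_mset x A)) =
      (\<Sum>k\<le>K. \<Sum>A\<in>{A\<in>Ms. count A v = k}. c A * prod_mset (image_mset x A))"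
    by (rule sum.group[symmetric]) (use assms in auto)
  also have "\<dots> = (\<Sum>k\<le>K. (\<Sum>A\<in>{A\<in>Ms. count A v = k}.
      c A * prod_mset (image_mset x (filter_mset (\<lambda>u. u \<noteq> v) A))) * x v ^ k)"
    unfolding sum_distrib_right by (intro sum.cong refl) (simp add: split)
  finally show ?thesis .
qed

lemma sum_monomials_strip_eq_0:
  fixes c :: "'a multiset \<Rightarrow> real"
  assumes "finite Ms" and "\<And>x. (\<Sum>A\<in>Ms. c A * prod_mset (image_mset x A)) = 0"
  shows "(\<Sum>A\<in>{A\<in>Ms. count A v = k}. c A * prod_mset (image_mset x (filter_mset (\<lambda>u. u \<noteq> v) A))) = 0"
proof -
  let ?strip = "filter_mset (\<lambda>u. u \<noteq> v)"
  let ?coeff = "\<lambda>k. \<Sum>A\<in>{A\<in>Ms. count A v = k}. c A * prod_mset (image_mset x (?strip A))"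
  define K where "K = k + (\<Sum>A\<in>Ms. size A)"
  have count_le: "count A v \<le> K" if "A \<in> Ms" for A
  proof -
    have "size A \<le> (\<Sum>A\<in>Ms. size A)" by (rule member_le_sum) (use that assms(1) in auto)
    then show ?thesis using count_le_size[of A v] by (simp add: K_def)
  qed
  have strip_free: "prod_mset (image_mset (x(v := y)) (?strip A)) = prod_mset (image_mset x (?strip A))"
    for y A by (intro arg_cong[where f = prod_mset] image_mset_cong) auto
  have "(\<Sum>k\<le>K. ?coeff k * y ^ k) = 0" for y
    using sum_monomials_by_degree[OF assms(1) count_le, of c "x(v := y)"] assms(2)
    by (simp add: strip_free)
  then have "\<forall>k'\<le>K. ?coeff k' = 0" using polyfun_eq_0[of ?coeff K] by blast
  then show ?thesis by (simp add: K_def)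
qed

text \<open>Induction on the variables: splitting off the powers of one variable \<open>v\<close> turns the sum
  into a univariate polynomial in \<open>x v\<close> whose coefficients do not involve \<open>x v\<close>.\<close>

lemma monomials_linearly_independent:
  fixes c :: "'a multiset \<Rightarrow> real"
  assumes "finite V" and "finite Ms" and "\<And>A. A \<in> Ms \<Longrightarrow> set_mset A \<subseteq> V"
    and "\<And>x. (\<Sum>A\<in>Ms. c A * prod_mset (image_mset x A)) = 0"
    and "A \<in> Ms"
  shows "c A = 0"
  using assms
proof (induction V arbitrary: Ms c A rule: finite_induct)
  case empty
  then have "Ms = {{#}}" by auto
  then show ?case using empty.prems(3)[of undefined] empty.prems(4) by simp
next
  case (insert v V)
  let ?strip = "filter_mset (\<lambda>u. u \<noteq> v)"
  let ?S = "{B\<in>Ms. count B v = count A v}"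
  let ?c = "\<lambda>B. c (B + replicate_mset (count A v) v)"
  have inj: "inj_on ?strip ?S"
  proof (rule inj_onI)
    fix A1 A2 assume "A1 \<in> ?S" "A2 \<in> ?S" "?strip A1 = ?strip A2"
    then show "A1 = A2"
      using filter_mset_neq_plus_replicate[of v A1] filter_mset_neq_plus_replicate[of v A2] by simp
  qed
  have split: "?strip B + replicate_mset (count A v) v = B" if "B \<in> ?S" for B
    using that filter_mset_neq_plus_replicate[of v B] by simp
  have "?c (?strip A) = 0"
  proof (rule insert.IH[where Ms = "?strip ` ?S" and c = ?c])
    have "(\<Sum>B\<in>?strip ` ?S. ?c B * prod_mset (image_mset x B)) =
        (\<Sum>B\<in>?S. c B * prod_mset (image_mset x (?strip B)))" for x
      unfolding sum.reindex[OF inj] comp_def by (intro sum.cong refl) (simp add: split)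
    then show "(\<Sum>B\<in>?strip ` ?S. ?c B * prod_mset (image_mset x B)) = 0" for x
      using sum_monomials_strip_eq_0[OF insert.prems(1,3)] by simp
    show "set_mset B \<subseteq> V" if "B \<in> ?strip ` ?S" for B
      using that insert.prems(2) by fastforce
  qed (use insert.prems(1,4) in auto)
  then show ?case by (simp add: filter_mset_neq_plus_replicate)
qed

section \<open>Polynomial maps as coefficient functions\<close>

text \<open>A slot \<open>(i, k, A)\<close> indexes the coefficient, in entry \<open>(i, k)\<close>, of the monomial
  \<open>\<Prod>(r, s)\<in>#A. X r s\<close>.\<close>
type_synonym slot = "nat \<times> nat \<times> (nat \<times> nat) multiset"

definition relabel :: "(nat \<Rightarrow> nat) \<Rightarrow> (nat \<times> nat) multiset \<Rightarrow> (nat \<times> nat) multiset" where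
  "relabel h A = image_mset (map_prod h h) A"

definition monomials :: "nat \<Rightarrow> nat \<Rightarrow> (nat \<times> nat) multiset set" where
  "monomials n d = {A. set_mset A \<subseteq> {..<n} \<times> {..<n} \<and> size A \<le> d}"

definition slots :: "nat \<Rightarrow> nat \<Rightarrow> slot set" where
  "slots n d = {(i, k, A). i < n \<and> k < n \<and> A \<in> monomials n d}"

definition monomial :: "mat \<Rightarrow> (nat \<times> nat) multiset \<Rightarrow> real" where
  "monomial X A = prod_mset (image_mset (\<lambda>(r, s). X r s) A)"

definition coeff_map :: "nat \<Rightarrow> nat \<Rightarrow> (slot \<Rightarrow> real) \<Rightarrow> mat \<Rightarrow> mat" where
  "coeff_map n d f X i k =
     (if i < n \<and> k < n then (\<Sum>A\<in>monomials n d. f (i, k, A) * monomial X A) else 0)"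

definition slot_act :: "(nat \<Rightarrow> nat) \<Rightarrow> slot \<Rightarrow> slot" where
  "slot_act g t = (g (fst t), g (fst (snd t)), relabel g (snd (snd t)))"

lemma finite_bounded_multisets:
  assumes "finite S"
  shows "finite {A. set_mset A \<subseteq> S \<and> size A \<le> d}"
proof -
  have "{A. set_mset A \<subseteq> S \<and> size A \<le> d} \<subseteq> mset ` {xs. set xs \<subseteq> S \<and> length xs \<le> d}"
  proof
    fix A assume "A \<in> {A. set_mset A \<subseteq> S \<and> size A \<le> d}"
    moreover obtain xs where "mset xs = A" using ex_mset by blast
    ultimately show "A \<in> mset ` {xs. set xs \<subseteq> S \<and> length xs \<le> d}" by auto
  qed
  then show ?thesis using finite_lists_length_le[OF assms] finite_subset by blast
qed

lemma finite_monomials: "finite (monomials n d)"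
  unfolding monomials_def by (rule finite_bounded_multisets) simp

lemma finite_slots: "finite (slots n d)"
proof -
  have "slots n d \<subseteq> {..<n} \<times> {..<n} \<times> monomials n d" by (auto simp: slots_def)
  then show ?thesis using finite_monomials finite_subset by blast
qed

lemma monomial_curry: "monomial (curry x) A = prod_mset (image_mset x A)"
  by (simp add: monomial_def case_prod_curry)

lemma monomial_coeffs_unique:
  assumes "\<And>X. (\<Sum>A\<in>monomials n d. c A * monomial X A) = (\<Sum>A\<in>monomials n d. c' A * monomial X A)"
    and "A \<in> monomials n d"
  shows "c A = c' A"
proof -
  have "c A - c' A = 0"
  proof (rule monomials_linearly_independent[where V = "{..<n} \<times> {..<n}", OF _ finite_monomials])
    show "(\<Sum>A\<in>monomials n d. (c A - c' A) * prod_mset (image_mset x A)) = 0" for x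
      using assms(1)[of "curry x"]
      by (simp add: monomial_curry left_diff_distrib sum_subtractf)
  qed (use assms(2) in \<open>auto simp: monomials_def\<close>)
  then show ?thesis by simp
qed

lemma coeff_map_eq_iff:
  "coeff_map n d f = coeff_map n d f' \<longleftrightarrow> (\<forall>t\<in>slots n d. f t = f' t)"
proof
  assume eq: "coeff_map n d f = coeff_map n d f'"
  show "\<forall>t\<in>slots n d. f t = f' t"
  proof
    fix t assume "t \<in> slots n d"
    then obtain i k A where t: "t = (i, k, A)" "i < n" "k < n" "A \<in> monomials n d"
      by (auto simp: slots_def)
    show "f t = f' t"
      using monomial_coeffs_unique[of "\<lambda>A. f (i, k, A)" n d "\<lambda>A. f' (i, k, A)"] t
        fun_cong[OF fun_cong[OF fun_cong[OF eq]], of _ i k]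
      by (simp add: coeff_map_def)
  qed
qed (auto simp: coeff_map_def slots_def intro!: sum.cong ext)

lemma sum_coeff_map:
  assumes "finite S"
  shows "(\<Sum>C\<in>S. c C * coeff_map n d (h C) X i k) = coeff_map n d (\<lambda>t. \<Sum>C\<in>S. c C * h C t) X i k"
  unfolding coeff_map_def by (auto simp: sum_distrib_left sum_distrib_right mult.assoc intro: sum.swap)

lemma relabel_comp: "relabel g (relabel h A) = relabel (g \<circ> h) A"
  by (simp add: relabel_def multiset.map_comp map_prod.comp)

lemma relabel_id: "relabel (\<lambda>x. x) A = A"
  by (simp add: relabel_def map_prod.id[unfolded id_def])

lemma relabel_cong:
  "(\<And>x. x \<in> fst ` set_mset A \<union> snd ` set_mset A \<Longrightarrow> g x = h x) \<Longrightarrow> relabel g A = relabel h A"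
  unfolding relabel_def by (rule image_mset_cong) (force simp: map_prod_def split: prod.splits)

lemma set_mset_relabel: "set_mset (relabel j A) = map_prod j j ` set_mset A"
  by (simp add: relabel_def)

lemma slot_act_comp: "slot_act g (slot_act h t) = slot_act (g \<circ> h) t"
  by (simp add: slot_act_def relabel_comp)

lemma slot_act_id: "slot_act (\<lambda>x. x) t = t"
  by (simp add: slot_act_def relabel_id)

lemma relabel_inv:
  assumes "g permutes S"
  shows "relabel (inv g) (relabel g A) = A" and "relabel g (relabel (inv g) A) = A"
proof -
  have "inv g \<circ> g = (\<lambda>x. x)" "g \<circ> inv g = (\<lambda>x. x)"
    using permutes_inverses[OF assms] by auto
  then show "relabel (inv g) (relabel g A) = A" "relabel g (relabel (inv g) A) = A"
    by (simp_all add: relabel_comp relabel_id)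
qed

lemma slot_act_inv:
  assumes "g permutes S"
  shows "slot_act (inv g) (slot_act g t) = t" and "slot_act g (slot_act (inv g) t) = t"
  using relabel_inv[OF assms] permutes_inverses[OF assms] by (simp_all add: slot_act_def)

lemma permutes_less_iff: "g permutes {..<n} \<Longrightarrow> g x < n \<longleftrightarrow> x < n"
  by (metis lessThan_iff permutes_in_image)

lemma relabel_in_monomials:
  assumes "g permutes {..<n}" and "A \<in> monomials n d"
  shows "relabel g A \<in> monomials n d"
  using assms permutes_less_iff[OF assms(1)] by (force simp: monomials_def relabel_def)

lemma slot_act_in_slots:
  assumes "g permutes {..<n}" and "t \<in> slots n d"
  shows "slot_act g t \<in> slots n d"
  using assms relabel_in_monomials[OF assms(1)] permutes_less_iff[OF assms(1)]
  by (auto simp: slots_def slot_act_def)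

lemma monomial_act: "monomial (act g X) A = monomial X (relabel (inv g) A)"
  by (simp add: monomial_def act_def relabel_def multiset.map_comp comp_def split_def)

lemma coeff_map_act:
  assumes g: "g permutes {..<n}"
  shows "coeff_map n d f (act g X) (g i) (g k) = coeff_map n d (f \<circ> slot_act g) X i k"
proof (cases "i < n \<and> k < n")
  case True
  have "(\<Sum>A\<in>monomials n d. f (g i, g k, A) * monomial (act g X) A) =
      (\<Sum>B\<in>monomials n d. f (g i, g k, relabel g B) * monomial X B)"
    by (rule sum.reindex_bij_witness[where i = "relabel g" and j = "relabel (inv g)"])
      (auto simp: relabel_inv[OF g] monomial_act intro: relabel_in_monomials g permutes_inv)
  then show ?thesis using True by (simp add: coeff_map_def slot_act_def permutes_less_iff[OF g])
qed (auto simp: coeff_map_def permutes_less_iff[OF g])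

lemma equivariant_coeff_map_iff:
  "equivariant n (coeff_map n d f) \<longleftrightarrow>
     (\<forall>g. g permutes {..<n} \<longrightarrow> (\<forall>t\<in>slots n d. f (slot_act g t) = f t))"
proof -
  have "coeff_map n d f (act g X) = act g (coeff_map n d f X) \<longleftrightarrow>
      coeff_map n d (f \<circ> slot_act g) X = coeff_map n d f X" if g: "g permutes {..<n}" for g X
  proof -
    have act_eq: "coeff_map n d f (act g X) i k = coeff_map n d (f \<circ> slot_act g) X (inv g i) (inv g k)"
      for i k using coeff_map_act[OF g, of d f X "inv g i" "inv g k"]
      by (simp add: permutes_inverses(1)[OF g])
    have "(\<forall>i k. F (inv g i) (inv g k) = F' (inv g i) (inv g k)) \<longleftrightarrow> (\<forall>i k. F i k = F' i k)"
      for F F' :: "nat \<Rightarrow> nat \<Rightarrow> real"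
      by (metis permutes_inverses(2)[OF g])
    from this[of "coeff_map n d (f \<circ> slot_act g) X" "coeff_map n d f X"] show ?thesis
      unfolding fun_eq_iff act_eq by (simp add: act_def)
  qed
  then have "(\<forall>X. coeff_map n d f (act g X) = act g (coeff_map n d f X)) \<longleftrightarrow>
      coeff_map n d (f \<circ> slot_act g) = coeff_map n d f" if "g permutes {..<n}" for g
    by (simp only: that fun_eq_iff[of "coeff_map n d (f \<circ> slot_act g)"])
  then show ?thesis
    unfolding equivariant_def coeff_map_eq_iff by auto
qed

lemma sum_count_monomial:
  assumes "A \<in> monomials n d"
  shows "(\<Sum>p\<in>{..<n} \<times> {..<n}. count A p) = size A"
proof -
  have "(\<Sum>p\<in>{..<n} \<times> {..<n}. count A p) = (\<Sum>p\<in>set_mset A. count A p)"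
    by (rule sum.mono_neutral_right) (use assms in \<open>auto simp: monomials_def not_in_iff\<close>)
  then show ?thesis by (simp add: size_multiset_overloaded_eq)
qed

lemma mono_count_eq_monomial:
  assumes "A \<in> monomials n d"
  shows "mono n (count A) X = monomial X A"
proof -
  have "monomial X A = (\<Prod>p\<in>set_mset A. (\<lambda>(r, s). X r s) p ^ count A p)"
    by (simp add: monomial_def image_prod_mset_multiplicity)
  also have "\<dots> = (\<Prod>p\<in>{..<n} \<times> {..<n}. (\<lambda>(r, s). X r s) p ^ count A p)"
    by (rule prod.mono_neutral_left) (use assms in \<open>auto simp: monomials_def not_in_iff\<close>)
  finally show ?thesis by (simp add: mono_def split_def)
qed

lemma sum_monomial_exps_eq_sum_monomials:
  "(\<Sum>\<alpha>\<in>monomial_exps n d. c \<alpha> * mono n \<alpha> X) = (\<Sum>A\<in>monomials n d. c (count A) * monomial X A)"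
proof (rule sum.reindex_bij_witness[where i = count and j = Abs_multiset])
  fix \<alpha> assume \<alpha>: "\<alpha> \<in> monomial_exps n d"
  have zero: "\<alpha> x = 0" if "x \<notin> {..<n} \<times> {..<n}" for x
    using \<alpha> that unfolding monomial_exps_def by blast
  have supp: "{x. 0 < \<alpha> x} \<subseteq> {..<n} \<times> {..<n}"
  proof
    fix x assume "x \<in> {x. 0 < \<alpha> x}"
    then show "x \<in> {..<n} \<times> {..<n}" using zero[of x] by (cases "x \<in> {..<n} \<times> {..<n}") auto
  qed
  then show count_\<alpha>: "count (Abs_multiset \<alpha>) = \<alpha>"
    by (intro count_Abs_multiset finite_subset[OF supp]) simp
  have set_\<alpha>: "set_mset (Abs_multiset \<alpha>) \<subseteq> {..<n} \<times> {..<n}"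
    using supp count_greater_zero_iff[of "Abs_multiset \<alpha>"] by (auto simp: count_\<alpha>)
  have "size (Abs_multiset \<alpha>) = (\<Sum>p\<in>set_mset (Abs_multiset \<alpha>). \<alpha> p)"
    by (simp add: size_multiset_overloaded_eq count_\<alpha>)
  also have "\<dots> = (\<Sum>p\<in>{..<n} \<times> {..<n}. \<alpha> p)"
    by (rule sum.mono_neutral_left) (use set_\<alpha> count_\<alpha> in \<open>auto simp: count_eq_zero_iff[symmetric]\<close>)
  finally show in_monomials: "Abs_multiset \<alpha> \<in> monomials n d"
    using set_\<alpha> \<alpha> by (simp add: monomials_def monomial_exps_def)
  show "c (count (Abs_multiset \<alpha>)) * monomial X (Abs_multiset \<alpha>) = c \<alpha> * mono n \<alpha> X"
    using mono_count_eq_monomial[OF in_monomials, of X] count_\<alpha> by simp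
next
  fix A assume A: "A \<in> monomials n d"
  show "Abs_multiset (count A) = A" by (rule count_inverse)
  show "count A \<in> monomial_exps n d"
    using A sum_count_monomial[OF A] by (auto simp: monomial_exps_def monomials_def count_eq_zero_iff)
qed

lemma poly_map_coeff_map: "poly_map n d (coeff_map n d f)"
  unfolding poly_map_def
proof (intro conjI allI impI)
  fix i k assume "i < n" "k < n"
  then show "\<exists>c. \<forall>X. coeff_map n d f X i k = (\<Sum>\<alpha>\<in>monomial_exps n d. c \<alpha> * mono n \<alpha> X)"
    by (intro exI[of _ "\<lambda>\<alpha>. f (i, k, Abs_multiset \<alpha>)"])
      (simp add: sum_monomial_exps_eq_sum_monomials coeff_map_def count_inverse)
qed (auto simp: coeff_map_def)

lemma poly_mapE:
  assumes "poly_map n d P"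
  obtains f where "P = coeff_map n d f"
proof -
  define c where "c i k = (SOME c. \<forall>X. P X i k = (\<Sum>\<alpha>\<in>monomial_exps n d. c \<alpha> * mono n \<alpha> X))" for i k
  have c: "P X i k = (\<Sum>\<alpha>\<in>monomial_exps n d. c i k \<alpha> * mono n \<alpha> X)" if "i < n" "k < n" for i k X
    using someI_ex[of "\<lambda>c. \<forall>X. P X i k = (\<Sum>\<alpha>\<in>monomial_exps n d. c \<alpha> * mono n \<alpha> X)"] assms that
    unfolding c_def poly_map_def by blast
  have "P = coeff_map n d (\<lambda>(i, k, A). c i k (count A))"
    using assms by (auto simp: fun_eq_iff poly_map_def coeff_map_def c sum_monomial_exps_eq_sum_monomials)
  then show ?thesis by (rule that)
qed

section \<open>Graph polynomials as labelling counts\<close>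

definition labellings :: "nat \<Rightarrow> mgraph \<Rightarrow> (nat \<Rightarrow> nat) set" where
  "labellings n H = PiE (nodes H) (\<lambda>_. {..<n})"

definition slot_of :: "(nat \<Rightarrow> nat) \<Rightarrow> mgraph \<Rightarrow> slot" where
  "slot_of j H = (j (out_a H), j (out_b H), relabel j (edges H))"

definition hom_count :: "nat \<Rightarrow> mgraph \<Rightarrow> slot \<Rightarrow> real" where
  "hom_count n H t = real (card {j \<in> labellings n H. slot_of j H = t})"

definition slot_support :: "slot \<Rightarrow> nat set" where
  "slot_support t = {fst t, fst (snd t)} \<union> fst ` set_mset (snd (snd t)) \<union> snd ` set_mset (snd (snd t))"

definition reduced :: "mgraph \<Rightarrow> bool" where
  "reduced H \<longleftrightarrow> wf_mgraph H \<and> (\<forall>v \<in> nodes H - {out_a H, out_b H}. \<not> isolated H v)"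

lemma finite_nodes [simp]: "finite (nodes H)"
  by (simp add: nodes_def)

lemma finite_labellings: "finite (labellings n H)"
  unfolding labellings_def by (rule finite_PiE) auto

lemma finite_slot_support: "finite (slot_support t)"
  by (simp add: slot_support_def)

lemma out_in_nodes: "wf_mgraph H \<Longrightarrow> out_a H \<in> nodes H \<and> out_b H \<in> nodes H"
  by (simp add: wf_mgraph_def)

lemma slot_of_in_slots:
  assumes "wf_mgraph H" "size (edges H) \<le> d" "j \<in> labellings n H"
  shows "slot_of j H \<in> slots n d"
proof -
  have "set_mset (relabel j (edges H)) \<subseteq> {..<n} \<times> {..<n}"
    using assms(1,3) by (force simp: set_mset_relabel wf_mgraph_def labellings_def)
  then show ?thesis
    using assms by (auto simp: slots_def slot_of_def monomials_def relabel_def wf_mgraph_def labellings_def)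
qed

lemma PH_eq_sum_labellings:
  assumes "i < n" "k < n"
  shows "PH n H X i k = (\<Sum>j\<in>{j \<in> labellings n H. j (out_a H) = i \<and> j (out_b H) = k}.
    monomial X (relabel j (edges H)))"
proof (cases "out_a H = out_b H \<and> i \<noteq> k")
  case True
  then have "{j \<in> labellings n H. j (out_a H) = i \<and> j (out_b H) = k} = {}"
    and "\<not> (i < n \<and> k < n \<and> (out_a H = out_b H \<longrightarrow> i = k))"
    by auto
  then show ?thesis by (simp only: PH_def if_False sum.empty)
next
  case False
  then show ?thesis using assms
    by (simp add: PH_def labellings_def monomial_def relabel_def multiset.map_comp comp_def split_def)
qed

lemma PH_eq_coeff_map:
  assumes wf: "wf_mgraph H" and size: "size (edges H) \<le> d"
  shows "PH n H = coeff_map n d (hom_count n H)"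
proof (intro ext)
  fix X i k
  show "PH n H X i k = coeff_map n d (hom_count n H) X i k"
  proof (cases "i < n \<and> k < n")
    case True
    let ?J = "{j \<in> labellings n H. j (out_a H) = i \<and> j (out_b H) = k}"
    have "relabel j (edges H) \<in> monomials n d" if "j \<in> ?J" for j
      using slot_of_in_slots[OF wf size, of j n] that by (auto simp: slots_def slot_of_def)
    then have "(\<Sum>j\<in>?J. monomial X (relabel j (edges H))) =
        (\<Sum>A\<in>monomials n d. \<Sum>j\<in>{j\<in>?J. relabel j (edges H) = A}. monomial X (relabel j (edges H)))"
      by (intro sum.group[symmetric] finite_monomials) (auto intro: finite_subset[OF _ finite_labellings])
    also have "\<dots> = (\<Sum>A\<in>monomials n d. hom_count n H (i, k, A) * monomial X A)"
    proof (rule sum.cong[OF refl])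
      fix A
      have "{j\<in>?J. relabel j (edges H) = A} = {j \<in> labellings n H. slot_of j H = (i, k, A)}"
        by (auto simp: slot_of_def)
      have "(\<Sum>j\<in>{j\<in>?J. relabel j (edges H) = A}. monomial X (relabel j (edges H))) =
          (\<Sum>j\<in>{j\<in>?J. relabel j (edges H) = A}. monomial X A)"
        by (rule sum.cong) auto
      then show "(\<Sum>j\<in>{j\<in>?J. relabel j (edges H) = A}. monomial X (relabel j (edges H))) =
          hom_count n H (i, k, A) * monomial X A"
        unfolding hom_count_def \<open>{j\<in>?J. relabel j (edges H) = A} = _\<close>[symmetric] by simp
    qed
    finally show ?thesis using True by (simp add: PH_eq_sum_labellings coeff_map_def)
  qed (auto simp: PH_def coeff_map_def)
qed

lemma mgraph_iso_relabel_iff: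
  "mgraph_iso H H' \<longleftrightarrow> (\<exists>f. bij_betw f (nodes H) (nodes H') \<and>
      relabel f (edges H) = edges H' \<and> f (out_a H) = out_a H' \<and> f (out_b H) = out_b H')"
  by (simp add: mgraph_iso_def relabel_def)

lemma mgraph_isoI:
  "bij_betw f (nodes H) (nodes H') \<Longrightarrow> relabel f (edges H) = edges H' \<Longrightarrow>
   f (out_a H) = out_a H' \<Longrightarrow> f (out_b H) = out_b H' \<Longrightarrow> mgraph_iso H H'"
  unfolding mgraph_iso_relabel_iff by blast

lemma mgraph_iso_refl: "mgraph_iso H H"
  by (rule mgraph_isoI[where f = "\<lambda>x. x"]) (auto simp: relabel_id bij_betw_def)

lemma relabel_inv_into:
  assumes "inj_on f S" "\<forall>e\<in>#E. fst e \<in> S \<and> snd e \<in> S"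
  shows "relabel (inv_into S f) (relabel f E) = E"
proof -
  have "relabel (inv_into S f \<circ> f) E = relabel (\<lambda>x. x) E"
    by (rule relabel_cong) (use assms in \<open>force simp: inv_into_f_f\<close>)
  then show ?thesis by (simp add: relabel_comp relabel_id)
qed

lemma mgraph_iso_sym:
  assumes wf: "wf_mgraph H" and iso: "mgraph_iso H H'"
  shows "mgraph_iso H' H"
proof -
  obtain f where f: "bij_betw f (nodes H) (nodes H')" "relabel f (edges H) = edges H'"
    "f (out_a H) = out_a H'" "f (out_b H) = out_b H'"
    using iso unfolding mgraph_iso_relabel_iff by blast
  have inj: "inj_on f (nodes H)" using f(1) bij_betw_imp_inj_on by blast
  show ?thesis
  proof (rule mgraph_isoI[where f = "inv_into (nodes H) f"])
    show "relabel (inv_into (nodes H) f) (edges H') = edges H"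
      using relabel_inv_into[OF inj, of "edges H"] wf f(2) by (auto simp: wf_mgraph_def)
  qed (use bij_betw_inv_into[OF f(1)] f(3,4)[symmetric] out_in_nodes[OF wf] inj in \<open>auto simp: inv_into_f_f\<close>)
qed

lemma mgraph_iso_trans:
  assumes "mgraph_iso H1 H2" "mgraph_iso H2 H3"
  shows "mgraph_iso H1 H3"
proof -
  obtain f where f: "bij_betw f (nodes H1) (nodes H2)" "relabel f (edges H1) = edges H2"
    "f (out_a H1) = out_a H2" "f (out_b H1) = out_b H2"
    using assms(1) unfolding mgraph_iso_relabel_iff by blast
  obtain g where g: "bij_betw g (nodes H2) (nodes H3)" "relabel g (edges H2) = edges H3"
    "g (out_a H2) = out_a H3" "g (out_b H2) = out_b H3"
    using assms(2) unfolding mgraph_iso_relabel_iff by blast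
  show ?thesis
    by (rule mgraph_isoI[where f = "g \<circ> f"]) (use f g bij_betw_trans in \<open>auto simp flip: relabel_comp\<close>)
qed

lemma iso_class_eq:
  assumes "wf_mgraph H" "mgraph_iso H H'"
  shows "iso_class H = iso_class H'"
  using assms mgraph_iso_sym mgraph_iso_trans unfolding iso_class_def by blast

lemma in_iso_class: "wf_mgraph H \<Longrightarrow> H \<in> iso_class H"
  by (simp add: iso_class_def mgraph_iso_refl)

text \<open>Transporting labellings along an isomorphism \<open>f\<close> and a permutation \<open>g\<close> of the indices,
  \<open>j \<mapsto> g \<circ> j \<circ> f\<close>, gives the invariance of the labelling counts under both.\<close>

lemma card_labellings_le:
  assumes wf: "wf_mgraph H" and f: "bij_betw f (nodes H) (nodes H')" "relabel f (edges H) = edges H'"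
    "f (out_a H) = out_a H'" "f (out_b H) = out_b H'"
    and g: "g permutes {..<n}"
  shows "card {j \<in> labellings n H'. slot_of j H' = t} \<le>
    card {j \<in> labellings n H. slot_of j H = slot_act g t}"
proof (rule card_inj_on_le[where f = "\<lambda>j. restrict (g \<circ> j \<circ> f) (nodes H)"])
  show "finite {j \<in> labellings n H. slot_of j H = slot_act g t}"
    using finite_labellings by (rule finite_subset[rotated]) auto
  show "inj_on (\<lambda>j. restrict (g \<circ> j \<circ> f) (nodes H)) {j \<in> labellings n H'. slot_of j H' = t}"
  proof (rule inj_onI)
    fix j1 j2
    assume j: "j1 \<in> {j \<in> labellings n H'. slot_of j H' = t}" "j2 \<in> {j \<in> labellings n H'. slot_of j H' = t}"
      and eq: "restrict (g \<circ> j1 \<circ> f) (nodes H) = restrict (g \<circ> j2 \<circ> f) (nodes H)"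
    have "j1 w = j2 w" if "w \<in> nodes H'" for w
    proof -
      have "w \<in> f ` nodes H" using f(1) that by (simp add: bij_betw_def)
      then obtain v where "v \<in> nodes H" "w = f v" by (rule imageE)
      then show ?thesis using fun_cong[OF eq, of v] permutes_inj[OF g] by (simp add: inj_eq)
    qed
    then show "j1 = j2"
      using j by (intro PiE_ext[of j1 "nodes H'" "\<lambda>_. {..<n}" j2]) (auto simp: labellings_def)
  qed
  show "(\<lambda>j. restrict (g \<circ> j \<circ> f) (nodes H)) ` {j \<in> labellings n H'. slot_of j H' = t} \<subseteq>
      {j \<in> labellings n H. slot_of j H = slot_act g t}"
  proof (rule image_subsetI)
    fix j assume "j \<in> {j \<in> labellings n H'. slot_of j H' = t}"
    then have j: "j \<in> labellings n H'" "slot_of j H' = t" by auto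
    have "relabel (restrict (g \<circ> j \<circ> f) (nodes H)) (edges H) = relabel g (relabel j (edges H'))"
      unfolding f(2)[symmetric] relabel_comp
      by (rule relabel_cong) (use wf in \<open>force simp: wf_mgraph_def\<close>)
    then have "slot_of (restrict (g \<circ> j \<circ> f) (nodes H)) H = slot_act g t"
      using j(2)[symmetric] f(3,4) out_in_nodes[OF wf] by (simp add: slot_of_def slot_act_def)
    moreover have "g (j (f v)) < n" if "v \<in> nodes H" for v
      using j(1) bij_betw_apply[OF f(1) that] permutes_less_iff[OF g] by (auto simp: labellings_def)
    then have "restrict (g \<circ> j \<circ> f) (nodes H) \<in> labellings n H"
      by (simp add: labellings_def restrict_PiE_iff)
    ultimately show "restrict (g \<circ> j \<circ> f) (nodes H) \<in> {j \<in> labellings n H. slot_of j H = slot_act g t}"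
      by simp
  qed
qed

lemma hom_count_slot_act:
  assumes wf: "wf_mgraph H" and g: "g permutes {..<n}"
  shows "hom_count n H (slot_act g t) = hom_count n H t"
proof -
  have id: "bij_betw (\<lambda>x. x) (nodes H) (nodes H)" "relabel (\<lambda>x. x) (edges H) = edges H"
    by (simp_all add: relabel_id bij_betw_def)
  show ?thesis
    using card_labellings_le[OF wf id _ _ g, of t]
      card_labellings_le[OF wf id _ _ permutes_inv[OF g], of "slot_act g t"]
    by (simp add: hom_count_def slot_act_inv(1)[OF g])
qed

lemma hom_count_iso:
  assumes "wf_mgraph H" "wf_mgraph H'" "mgraph_iso H H'"
  shows "hom_count n H = hom_count n H'"
proof -
  have le: "card {j \<in> labellings n H2. slot_of j H2 = t} \<le> card {j \<in> labellings n H1. slot_of j H1 = t}"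
    if "wf_mgraph H1" "mgraph_iso H1 H2" for H1 H2 t
    using that card_labellings_le[OF that(1) _ _ _ _ permutes_id[unfolded id_def], of _ H2 n t]
    unfolding mgraph_iso_relabel_iff by (auto simp: slot_act_id)
  show ?thesis
    using le[OF assms(1,3)] le[OF assms(2) mgraph_iso_sym[OF assms(1,3)]]
    by (intro ext) (simp add: hom_count_def le_antisym)
qed

lemma slot_support_slot_of:
  assumes "reduced H" "j \<in> labellings n H"
  shows "slot_support (slot_of j H) = j ` nodes H"
proof
  have wf: "wf_mgraph H" using assms(1) by (simp add: reduced_def)
  then show "slot_support (slot_of j H) \<subseteq> j ` nodes H"
    by (force simp: slot_support_def slot_of_def set_mset_relabel wf_mgraph_def)
  show "j ` nodes H \<subseteq> slot_support (slot_of j H)"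
  proof
    fix w assume "w \<in> j ` nodes H"
    then obtain v where v: "v \<in> nodes H" "w = j v" by auto
    show "w \<in> slot_support (slot_of j H)"
    proof (cases "v \<in> {out_a H, out_b H}")
      case False
      then have "\<not> isolated H v" using assms(1) v by (auto simp: reduced_def)
      then obtain e where e: "e \<in># edges H" "fst e = v \<or> snd e = v" by (auto simp: isolated_def)
      then have "map_prod j j e \<in># relabel j (edges H)" by (simp add: set_mset_relabel)
      then show ?thesis using e v by (cases e) (force simp: slot_support_def slot_of_def)
    qed (use v in \<open>auto simp: slot_support_def slot_of_def\<close>)
  qed
qed

lemma slot_support_slot_act: "slot_support (slot_act g t) = g ` slot_support t"
  by (auto simp: slot_support_def slot_act_def set_mset_relabel image_Un image_image)

lemma card_slot_support_slot_act:
  "g permutes S \<Longrightarrow> card (slot_support (slot_act g t)) = card (slot_support t)"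
  by (simp add: slot_support_slot_act card_image inj_on_subset[OF permutes_inj])

lemma card_slot_support_le_nodes:
  assumes "reduced H" "j \<in> labellings n H"
  shows "card (slot_support (slot_of j H)) \<le> card (nodes H)"
  using slot_support_slot_of[OF assms] card_image_le[OF finite_nodes] by simp

lemma inj_on_labelling_iff:
  assumes "reduced H" "j \<in> labellings n H"
  shows "inj_on j (nodes H) \<longleftrightarrow> card (slot_support (slot_of j H)) = card (nodes H)"
  using slot_support_slot_of[OF assms] by (simp add: inj_on_iff_eq_card)

lemma mgraph_iso_of_slot_of_eq:
  assumes H: "reduced H" and H': "reduced H'"
    and j: "j \<in> labellings n H" "inj_on j (nodes H)" and j': "j' \<in> labellings n H'"
    and eq: "slot_of j H = slot_of j' H'" and card: "card (nodes H') \<le> card (nodes H)"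
  shows "mgraph_iso H' H"
proof -
  have wf: "wf_mgraph H" using H by (simp add: reduced_def)
  have image_eq: "j' ` nodes H' = j ` nodes H"
    using slot_support_slot_of[OF H j(1)] slot_support_slot_of[OF H' j'] eq by simp
  have "inj_on j' (nodes H')"
    using inj_on_labelling_iff[OF H j(1)] inj_on_labelling_iff[OF H' j'] j(2) eq card
      card_slot_support_le_nodes[OF H' j'] by simp
  then have bij': "bij_betw j' (nodes H') (j ` nodes H)"
    unfolding image_eq[symmetric] by (rule inj_on_imp_bij_betw)
  have bij: "bij_betw j (nodes H) (j ` nodes H)" using j(2) by (rule inj_on_imp_bij_betw)
  have eqs: "j (out_a H) = j' (out_a H')" "j (out_b H) = j' (out_b H')"
    "relabel j (edges H) = relabel j' (edges H')"
    using eq by (auto simp: slot_of_def)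
  show ?thesis
  proof (rule mgraph_isoI[where f = "inv_into (nodes H) j \<circ> j'"])
    show "bij_betw (inv_into (nodes H) j \<circ> j') (nodes H') (nodes H)"
      by (rule bij_betw_trans[OF bij' bij_betw_inv_into[OF bij]])
    have "relabel (inv_into (nodes H) j \<circ> j') (edges H') = relabel (inv_into (nodes H) j) (relabel j (edges H))"
      by (simp add: relabel_comp[symmetric] eqs)
    also have "\<dots> = edges H"
      using relabel_inv_into[OF j(2), of "edges H"] wf by (auto simp: wf_mgraph_def)
    finally show "relabel (inv_into (nodes H) j \<circ> j') (edges H') = edges H" .
  qed (use eqs(1,2)[symmetric] out_in_nodes[OF wf] j(2) in \<open>simp_all add: inv_into_f_f\<close>)
qed

lemma bij_betw_extends_to_permutation:
  assumes U: "finite U" and AB: "A \<subseteq> U" "B \<subseteq> U" and phi: "bij_betw \<phi> A B"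
  obtains g where "g permutes U" "\<And>x. x \<in> A \<Longrightarrow> g x = \<phi> x"
proof -
  have "card (U - A) = card (U - B)"
    using bij_betw_same_card[OF phi] AB U by (simp add: card_Diff_subset finite_subset)
  then obtain \<psi> where psi: "bij_betw \<psi> (U - A) (U - B)"
    using finite_same_card_bij[of "U - A" "U - B"] U by auto
  define g where "g x = (if x \<in> U then (if x \<in> A then \<phi> x else \<psi> x) else x)" for x
  have "bij_betw (\<lambda>x. if x \<in> A then \<phi> x else \<psi> x) (A \<union> (U - A)) (B \<union> (U - B))"
    by (rule bij_betw_disjoint_Un[OF phi psi]) auto
  moreover have "A \<union> (U - A) = U" "B \<union> (U - B) = U" using AB by auto
  ultimately have "bij_betw g U U"
    by (simp add: g_def bij_betw_cong[of U g])
  then have "g permutes U" by (rule bij_imp_permutes) (simp add: g_def)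
  then show ?thesis by (rule that) (use AB in \<open>auto simp: g_def\<close>)
qed

lemma slot_act_between_injective_labellings:
  assumes H: "reduced H" and j: "j \<in> labellings n H" "inj_on j (nodes H)"
    and j': "j' \<in> labellings n H" "inj_on j' (nodes H)"
  obtains g where "g permutes {..<n}" "slot_act g (slot_of j H) = slot_of j' H"
proof -
  have wf: "wf_mgraph H" using H by (simp add: reduced_def)
  have bij: "bij_betw (j' \<circ> inv_into (nodes H) j) (j ` nodes H) (j' ` nodes H)"
    using bij_betw_inv_into[OF inj_on_imp_bij_betw[OF j(2)]] inj_on_imp_bij_betw[OF j'(2)]
    by (rule bij_betw_trans)
  have sub: "j ` nodes H \<subseteq> {..<n}" "j' ` nodes H \<subseteq> {..<n}"
    using j(1) j'(1) by (auto simp: labellings_def)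
  obtain g where g: "g permutes {..<n}"
    and g_eq: "\<And>x. x \<in> j ` nodes H \<Longrightarrow> g x = (j' \<circ> inv_into (nodes H) j) x"
    using bij_betw_extends_to_permutation[OF finite_lessThan sub bij] by blast
  have gj: "g (j v) = j' v" if "v \<in> nodes H" for v
    using g_eq that j(2) by (simp add: inv_into_f_f)
  have "relabel g (relabel j (edges H)) = relabel j' (edges H)"
    unfolding relabel_comp by (rule relabel_cong) (use wf gj in \<open>force simp: wf_mgraph_def\<close>)
  then have "slot_act g (slot_of j H) = slot_of j' H"
    using gj out_in_nodes[OF wf] by (simp add: slot_act_def slot_of_def)
  with g show ?thesis by (rule that)
qed

lemma card_set_mset_le_size: "card (set_mset A) \<le> size A"
  by (induction A) (auto simp: card_insert_if)

lemma card_slot_support_le: "card (slot_support (i, k, A)) \<le> 2 + 2 * size A"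
proof -
  have "card {i, k} \<le> 2" by (cases "i = k") auto
  moreover have "card (fst ` set_mset A) \<le> size A" "card (snd ` set_mset A) \<le> size A"
    using card_image_le[OF finite_set_mset, of fst A] card_image_le[OF finite_set_mset, of snd A]
      card_set_mset_le_size[of A] by linarith+
  moreover have "card ({i, k} \<union> fst ` set_mset A \<union> snd ` set_mset A) \<le>
      card {i, k} + card (fst ` set_mset A) + card (snd ` set_mset A)"
    using card_Un_le[of "{i, k} \<union> fst ` set_mset A" "snd ` set_mset A"]
      card_Un_le[of "{i, k}" "fst ` set_mset A"] by linarith
  ultimately show ?thesis unfolding slot_support_def fst_conv snd_conv by linarith
qed

lemma slot_support_subset_lessThan: "t \<in> slots n d \<Longrightarrow> slot_support t \<subseteq> {..<n}"
  by (auto simp: slots_def slot_support_def monomials_def)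

lemma reduced_graph_of_slot:
  assumes l: "bij_betw l {1..m} (slot_support (i, k, A))"
  defines "H \<equiv> (m, relabel (inv_into {1..m} l) A, inv_into {1..m} l i, inv_into {1..m} l k)"
  shows "reduced H" and "slot_of (restrict l {1..m}) H = (i, k, A)"
proof -
  let ?S = "slot_support (i, k, A)" and ?lam = "inv_into {1..m} l"
  have H_parts: "nodes H = {1..m}" "edges H = relabel ?lam A" "out_a H = ?lam i" "out_b H = ?lam k"
    by (simp_all add: H_def nodes_def edges_def out_a_def out_b_def)
  have lam_in: "?lam x \<in> {1..m}" if "x \<in> ?S" for x
    using bij_betw_inv_into[OF l] that by (auto simp: bij_betw_def)
  have l_lam: "l (?lam x) = x" if "x \<in> ?S" for x
    using l that by (meson bij_betw_inv_into_right)
  have lam_l: "?lam (l v) = v" if "v \<in> {1..m}" for v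
    using l that by (meson bij_betw_inv_into_left)
  have in_S: "i \<in> ?S" "k \<in> ?S" "\<And>e. e \<in># A \<Longrightarrow> fst e \<in> ?S \<and> snd e \<in> ?S"
    by (auto simp: slot_support_def)
  show "reduced H"
    unfolding reduced_def
  proof
    show "wf_mgraph H"
      using in_S lam_in by (auto simp: wf_mgraph_def H_parts relabel_def)
    show "\<forall>v\<in>nodes H - {out_a H, out_b H}. \<not> isolated H v"
    proof
      fix v assume v: "v \<in> nodes H - {out_a H, out_b H}"
      then have "l v \<noteq> i" "l v \<noteq> k" "l v \<in> ?S"
        using lam_l bij_betw_apply[OF l] by (auto simp: H_parts)
      then obtain e where e: "e \<in># A" "fst e = l v \<or> snd e = l v"
        by (auto simp: slot_support_def)
      then have "map_prod ?lam ?lam e \<in># edges H"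
        "fst (map_prod ?lam ?lam e) = v \<or> snd (map_prod ?lam ?lam e) = v"
        using v lam_l by (auto simp: H_parts relabel_def)
      then show "\<not> isolated H v" unfolding isolated_def by blast
    qed
  qed
  have "relabel (restrict l {1..m}) (relabel ?lam A) = relabel (\<lambda>x. x) A"
    unfolding relabel_comp by (rule relabel_cong) (use in_S(3) lam_in l_lam in force)
  then show "slot_of (restrict l {1..m}) H = (i, k, A)"
    using in_S lam_in l_lam by (simp add: slot_of_def H_parts relabel_id)
qed

lemma slot_realisation:
  assumes t: "t \<in> slots n d"
  obtains H j where "admissible n d H" "j \<in> labellings n H" "inj_on j (nodes H)" "slot_of j H = t"
proof -
  obtain i k A where t_eq: "t = (i, k, A)" and A: "A \<in> monomials n d"
    using t by (auto simp: slots_def)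
  let ?S = "slot_support (i, k, A)"
  let ?m = "card ?S"
  have S_sub: "?S \<subseteq> {..<n}" using slot_support_subset_lessThan t t_eq by simp
  obtain l where l: "bij_betw l {1..?m} ?S"
    using finite_same_card_bij[of "{1..?m}" ?S] finite_slot_support by auto
  define H where "H = (?m, relabel (inv_into {1..?m} l) A, inv_into {1..?m} l i, inv_into {1..?m} l k)"
  have H_parts: "nodes H = {1..?m}" "size (edges H) = size A"
    by (simp_all add: H_def nodes_def edges_def relabel_def)
  have "?m \<le> n" using card_mono[OF finite_lessThan S_sub] by simp
  moreover have "?m \<le> 2 + 2 * d" using card_slot_support_le[of i k A] A by (simp add: monomials_def)
  moreover have "reduced H"
    unfolding H_def by (rule reduced_graph_of_slot(1)[OF l])
  ultimately have adm: "admissible n d H"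
    using A unfolding admissible_def reduced_def by (simp add: H_parts monomials_def)
  have "restrict l {1..?m} \<in> labellings n H"
    using bij_betw_apply[OF l] S_sub by (force simp: labellings_def H_parts)
  moreover have "inj_on (restrict l {1..?m}) (nodes H)"
    using bij_betw_imp_inj_on[OF l] by (simp add: H_parts)
  ultimately have lab: "restrict l {1..?m} \<in> labellings n H" "inj_on (restrict l {1..?m}) (nodes H)" .
  have "slot_of (restrict l {1..?m}) H = t"
    unfolding H_def t_eq by (rule reduced_graph_of_slot(2)[OF l])
  then show ?thesis by (rule that[OF adm lab])
qed

section \<open>Orbits and triangularity\<close>

definition slot_orbit :: "nat \<Rightarrow> slot \<Rightarrow> slot set" where
  "slot_orbit n t = (\<lambda>g. slot_act g t) ` {g. g permutes {..<n}}"

lemma finite_slot_orbit: "finite (slot_orbit n t)"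
  unfolding slot_orbit_def by (rule finite_imageI) (simp add: finite_permutations)

lemma slot_in_slot_orbit: "t \<in> slot_orbit n t"
  unfolding slot_orbit_def
  by (rule image_eqI[where x = "\<lambda>x. x"]) (simp_all add: slot_act_id permutes_id[unfolded id_def])

lemma slot_orbitE:
  assumes "s \<in> slot_orbit n t"
  obtains g where "g permutes {..<n}" "s = slot_act g t"
  using assms by (auto simp: slot_orbit_def)

lemma slot_orbit_sym:
  assumes "s \<in> slot_orbit n t"
  shows "t \<in> slot_orbit n s"
proof -
  obtain g where g: "g permutes {..<n}" "s = slot_act g t"
    using assms by (rule slot_orbitE)
  then have "t = slot_act (inv g) s" by (simp add: slot_act_inv(1))
  then show ?thesis using permutes_inv[OF g(1)] unfolding slot_orbit_def by blast
qed

lemma slot_orbit_eq: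
  assumes "s \<in> slot_orbit n t"
  shows "slot_orbit n s = slot_orbit n t"
proof -
  have "slot_orbit n s \<subseteq> slot_orbit n t" if "s \<in> slot_orbit n t" for s t
    using that by (elim slot_orbitE) (force simp: slot_orbit_def slot_act_comp intro: permutes_compose)
  then show ?thesis using assms slot_orbit_sym by blast
qed

lemma slot_orbit_subset_slots: "t \<in> slots n d \<Longrightarrow> slot_orbit n t \<subseteq> slots n d"
  by (auto simp: slot_orbit_def slot_act_in_slots)

lemma card_slot_support_orbit: "s \<in> slot_orbit n t \<Longrightarrow> card (slot_support s) = card (slot_support t)"
  by (elim slot_orbitE) (simp add: card_slot_support_slot_act)

lemma hom_count_nonzeroE:
  assumes "hom_count n H t \<noteq> 0"
  obtains j where "j \<in> labellings n H" "slot_of j H = t"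
proof -
  have "card {j \<in> labellings n H. slot_of j H = t} \<noteq> 0"
    using assms by (simp add: hom_count_def)
  then have "{j \<in> labellings n H. slot_of j H = t} \<noteq> {}"
    by (metis card.empty)
  then show ?thesis using that by blast
qed

lemma hom_count_pos:
  assumes "l \<in> labellings n H" "slot_of l H = t"
  shows "hom_count n H t > 0"
proof -
  have "finite {j \<in> labellings n H. slot_of j H = t}"
    using finite_labellings by (rule finite_subset[rotated]) auto
  then show ?thesis using assms by (auto simp: hom_count_def card_gt_0_iff)
qed

lemma hom_count_support_le:
  assumes "reduced H" "l \<in> labellings n H" "inj_on l (nodes H)" "slot_of l H = t"
    and "hom_count n H t' \<noteq> 0"
  shows "card (slot_support t') \<le> card (slot_support t)"
proof -
  obtain j where j: "j \<in> labellings n H" "slot_of j H = t'"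
    using assms(5) by (rule hom_count_nonzeroE)
  then show ?thesis
    using card_slot_support_le_nodes[OF assms(1) j(1)] inj_on_labelling_iff[OF assms(1,2)] assms(3,4)
    by simp
qed

lemma hom_count_top_level_in_orbit:
  assumes H: "reduced H" and l: "l \<in> labellings n H" "inj_on l (nodes H)" "slot_of l H = t"
    and nz: "hom_count n H t' \<noteq> 0" and le: "card (slot_support t) \<le> card (slot_support t')"
  shows "t' \<in> slot_orbit n t"
proof -
  obtain j where j: "j \<in> labellings n H" "slot_of j H = t'"
    using nz by (rule hom_count_nonzeroE)
  have "inj_on j (nodes H)"
    using inj_on_labelling_iff[OF H l(1)] inj_on_labelling_iff[OF H j(1)]
      card_slot_support_le_nodes[OF H j(1)] l(2,3) j(2) le by simp
  then obtain g where "g permutes {..<n}" "slot_act g (slot_of l H) = slot_of j H"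
    using slot_act_between_injective_labellings[OF H l(1,2) j(1)] by blast
  then show ?thesis using l(3) j(2) by (auto simp: slot_orbit_def)
qed

section \<open>Spanning and independence\<close>

lemma finite_admissible: "finite {H. admissible n d H}"
proof -
  let ?M = "{A. set_mset A \<subseteq> {..n} \<times> {..n} \<and> size A \<le> d}"
  have "{H. admissible n d H} \<subseteq> {..n} \<times> ?M \<times> {..n} \<times> {..n}"
  proof
    fix H assume "H \<in> {H. admissible n d H}"
    moreover obtain m E a b where "H = (m, E, a, b)" by (cases H) auto
    ultimately show "H \<in> {..n} \<times> ?M \<times> {..n} \<times> {..n}"
      by (force simp: admissible_def wf_mgraph_def nodes_def edges_def out_a_def out_b_def)
  qed
  moreover have "finite ({..n} \<times> ?M \<times> {..n} \<times> {..n})"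
    using finite_bounded_multisets[of "{..n} \<times> {..n}" d] by simp
  ultimately show ?thesis using finite_subset by blast
qed

lemma finite_Bclasses: "finite (Bclasses n d)"
  unfolding Bclasses_def using finite_admissible by simp

definition class_rep :: "nat \<Rightarrow> nat \<Rightarrow> mgraph set \<Rightarrow> mgraph" where
  "class_rep n d C = (SOME H. admissible n d H \<and> C = iso_class H)"

lemma class_rep:
  assumes "C \<in> Bclasses n d"
  shows "admissible n d (class_rep n d C)" and "C = iso_class (class_rep n d C)"
proof -
  have "\<exists>H. admissible n d H \<and> C = iso_class H" using assms by (auto simp: Bclasses_def)
  then have "admissible n d (class_rep n d C) \<and> C = iso_class (class_rep n d C)"
    unfolding class_rep_def by (rule someI_ex)
  then show "admissible n d (class_rep n d C)" "C = iso_class (class_rep n d C)" by auto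
qed

lemma admissible_reduced: "admissible n d H \<Longrightarrow> reduced H"
  by (simp add: admissible_def reduced_def)

lemma admissible_wf: "admissible n d H \<Longrightarrow> wf_mgraph H"
  by (simp add: admissible_def)

lemma hom_count_class_rep:
  assumes "admissible n d H"
  shows "hom_count n (class_rep n d (iso_class H)) = hom_count n H"
proof -
  have C: "iso_class H \<in> Bclasses n d" using assms by (simp add: Bclasses_def)
  let ?R = "class_rep n d (iso_class H)"
  have "H \<in> iso_class ?R"
    using class_rep(2)[OF C] in_iso_class[OF admissible_wf[OF assms]] by simp
  then show ?thesis
    using hom_count_iso admissible_wf[OF assms] admissible_wf[OF class_rep(1)[OF C]]
    by (auto simp: iso_class_def)
qed

text \<open>\<open>PC\<close> does not depend on the chosen representative, since isomorphic graphs have the same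
  labelling counts.\<close>

lemma PC_iso_class:
  assumes "admissible n d H"
  shows "PC n (iso_class H) = coeff_map n d (hom_count n H)"
proof -
  define R where "R = (SOME H'. H' \<in> iso_class H)"
  have "R \<in> iso_class H"
    unfolding R_def by (rule someI[of _ H]) (rule in_iso_class[OF admissible_wf[OF assms]])
  then have wf: "wf_mgraph R" and iso: "mgraph_iso H R" by (auto simp: iso_class_def)
  have "size (edges R) \<le> d"
    using iso assms unfolding admissible_def mgraph_iso_def by (metis size_image_mset)
  then have "PC n (iso_class H) = coeff_map n d (hom_count n R)"
    unfolding PC_def R_def[symmetric] by (rule PH_eq_coeff_map[OF wf])
  then show ?thesis
    using hom_count_iso[OF admissible_wf[OF assms] wf iso] by simp
qed

lemma PC_class_rep: "C \<in> Bclasses n d \<Longrightarrow> PC n C = coeff_map n d (hom_count n (class_rep n d C))"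
  using class_rep PC_iso_class by metis

definition in_hom_span :: "nat \<Rightarrow> nat \<Rightarrow> (slot \<Rightarrow> real) \<Rightarrow> bool" where
  "in_hom_span n d f \<longleftrightarrow>
     (\<exists>c. \<forall>t\<in>slots n d. f t = (\<Sum>C\<in>Bclasses n d. c C * hom_count n (class_rep n d C) t))"

lemma in_hom_span_cong: "in_hom_span n d f \<Longrightarrow> (\<And>t. t \<in> slots n d \<Longrightarrow> f t = h t) \<Longrightarrow> in_hom_span n d h"
  unfolding in_hom_span_def by auto

lemma in_hom_span_zero: "in_hom_span n d (\<lambda>_. 0)"
  unfolding in_hom_span_def by (rule exI[of _ "\<lambda>_. 0"]) simp

lemma in_hom_span_add:
  assumes "in_hom_span n d f" "in_hom_span n d h"
  shows "in_hom_span n d (\<lambda>t. f t + h t)"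
proof -
  obtain c1 c2 where
    "\<forall>t\<in>slots n d. f t = (\<Sum>C\<in>Bclasses n d. c1 C * hom_count n (class_rep n d C) t)"
    "\<forall>t\<in>slots n d. h t = (\<Sum>C\<in>Bclasses n d. c2 C * hom_count n (class_rep n d C) t)"
    using assms unfolding in_hom_span_def by blast
  then show ?thesis
    unfolding in_hom_span_def
    by (intro exI[of _ "\<lambda>C. c1 C + c2 C"]) (simp add: distrib_right sum.distrib)
qed

lemma in_hom_span_sum:
  assumes "finite S" and "\<And>x. x \<in> S \<Longrightarrow> in_hom_span n d (F x)"
  shows "in_hom_span n d (\<lambda>t. \<Sum>x\<in>S. a x * F x t)"
proof -
  have "\<forall>x\<in>S. \<exists>c. \<forall>t\<in>slots n d. F x t = (\<Sum>C\<in>Bclasses n d. c C * hom_count n (class_rep n d C) t)"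
    using assms(2) unfolding in_hom_span_def by blast
  from bchoice[OF this] obtain c where c: "\<forall>x\<in>S. \<forall>t\<in>slots n d.
      F x t = (\<Sum>C\<in>Bclasses n d. c x C * hom_count n (class_rep n d C) t)"
    by blast
  show ?thesis
    unfolding in_hom_span_def
  proof (intro exI[of _ "\<lambda>C. \<Sum>x\<in>S. a x * c x C"] ballI)
    fix t assume "t \<in> slots n d"
    then show "(\<Sum>x\<in>S. a x * F x t) =
        (\<Sum>C\<in>Bclasses n d. (\<Sum>x\<in>S. a x * c x C) * hom_count n (class_rep n d C) t)"
      by (simp add: c sum_distrib_left sum_distrib_right mult.assoc sum.swap[of _ S])
  qed
qed

lemma in_hom_span_hom_count:
  assumes "admissible n d H"
  shows "in_hom_span n d (hom_count n H)"
proof -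
  have C: "iso_class H \<in> Bclasses n d" using assms by (simp add: Bclasses_def)
  have "(\<Sum>C\<in>Bclasses n d. (if C = iso_class H then 1 else 0) * hom_count n (class_rep n d C) t) =
      (\<Sum>C\<in>Bclasses n d. if C = iso_class H then hom_count n (class_rep n d C) t else 0)" for t
    by (rule sum.cong) auto
  then have "hom_count n H t =
      (\<Sum>C\<in>Bclasses n d. (if C = iso_class H then 1 else 0) * hom_count n (class_rep n d C) t)" for t
    using C by (simp add: sum.delta[OF finite_Bclasses] hom_count_class_rep[OF assms])
  then show ?thesis
    unfolding in_hom_span_def by (intro exI[of _ "\<lambda>C. if C = iso_class H then 1 else 0"]) blast
qed

definition realises :: "nat \<Rightarrow> nat \<Rightarrow> mgraph \<Rightarrow> slot \<Rightarrow> bool" where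
  "realises n d H t \<longleftrightarrow> admissible n d H \<and>
     (\<exists>l \<in> labellings n H. inj_on l (nodes H) \<and> slot_of l H = t)"

lemma realisesE:
  assumes "realises n d H t"
  obtains l where "admissible n d H" "reduced H" "l \<in> labellings n H" "inj_on l (nodes H)"
    "slot_of l H = t"
  using assms admissible_reduced unfolding realises_def by blast

text \<open>Dividing by the orbit size makes the realisations of one support level sum to an invariant
  function on that level.\<close>

lemma sum_level_realisations:
  assumes inv: "\<And>g t. g permutes {..<n} \<Longrightarrow> t \<in> slots n d \<Longrightarrow> f (slot_act g t) = f t"
    and G: "\<And>t. t \<in> slots n d \<Longrightarrow> realises n d (G t) t"
    and t': "t' \<in> slots n d"
  defines "D \<equiv> {t \<in> slots n d. card (slot_support t) = card (slot_support t')}"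
  shows "(\<Sum>t\<in>D. f t / (card (slot_orbit n t) * hom_count n (G t) t) * hom_count n (G t) t') = f t'"
proof -
  let ?term = "\<lambda>t. f t / (card (slot_orbit n t) * hom_count n (G t) t) * hom_count n (G t) t'"
  have orbit_sub: "slot_orbit n t' \<subseteq> D"
  proof
    fix s assume "s \<in> slot_orbit n t'"
    then show "s \<in> D"
      using slot_orbit_subset_slots[OF t'] card_slot_support_orbit[of s n t'] by (auto simp: D_def)
  qed
  have "?term t = 0" if "t \<in> D - slot_orbit n t'" for t
  proof -
    have "realises n d (G t) t" using G that by (simp add: D_def)
    then obtain l where l: "reduced (G t)" "l \<in> labellings n (G t)" "inj_on l (nodes (G t))"
      "slot_of l (G t) = t" by (elim realisesE) blast
    show ?thesis
    proof (rule ccontr)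
      assume "?term t \<noteq> 0"
      then have "hom_count n (G t) t' \<noteq> 0" by auto
      moreover have "card (slot_support t) \<le> card (slot_support t')" using that by (simp add: D_def)
      ultimately have "t \<in> slot_orbit n t'"
        using hom_count_top_level_in_orbit[OF l] slot_orbit_sym by blast
      then show False using that by simp
    qed
  qed
  then have "(\<Sum>t\<in>D. ?term t) = (\<Sum>t\<in>slot_orbit n t'. ?term t)"
    by (intro sum.mono_neutral_right orbit_sub) (auto simp: D_def finite_slots)
  also have "\<dots> = (\<Sum>t\<in>slot_orbit n t'. f t' / card (slot_orbit n t'))"
  proof (rule sum.cong[OF refl])
    fix t assume t: "t \<in> slot_orbit n t'"
    then have "realises n d (G t) t" using G orbit_sub unfolding D_def by blast
    then obtain l where l: "admissible n d (G t)" "l \<in> labellings n (G t)" "slot_of l (G t) = t"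
      by (elim realisesE) blast
    obtain g where g: "g permutes {..<n}" "t' = slot_act g t"
      using slot_orbit_sym[OF t] by (rule slot_orbitE)
    have "t \<in> slots n d" using orbit_sub t unfolding D_def by blast
    then have "hom_count n (G t) t' = hom_count n (G t) t" "f t' = f t"
      using hom_count_slot_act[OF admissible_wf[OF l(1)] g(1)] inv[OF g(1)] g(2) by simp_all
    then show "?term t = f t' / card (slot_orbit n t')"
      using hom_count_pos[OF l(2,3)] slot_orbit_eq[OF t] by simp
  qed
  also have "\<dots> = f t'"
    using finite_slot_orbit slot_in_slot_orbit[of t' n] by (auto simp: card_gt_0_iff)
  finally show ?thesis .
qed

lemma invariant_in_hom_span:
  assumes G: "\<And>t. t \<in> slots n d \<Longrightarrow> realises n d (G t) t"
  shows "(\<And>g t. g permutes {..<n} \<Longrightarrow> t \<in> slots n d \<Longrightarrow> f (slot_act g t) = f t) \<Longrightarrow>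
    (\<And>t. t \<in> slots n d \<Longrightarrow> card (slot_support t) > m \<Longrightarrow> f t = 0) \<Longrightarrow> in_hom_span n d f"
proof (induction m arbitrary: f)
  case 0
  have "card (slot_support t) > 0" for t
    using finite_slot_support by (auto simp: card_gt_0_iff slot_support_def)
  then show ?case using 0(2) by (intro in_hom_span_cong[OF in_hom_span_zero]) auto
next
  case (Suc m)
  define D where "D = {t \<in> slots n d. card (slot_support t) = Suc m}"
  define w where "w t = f t / (card (slot_orbit n t) * hom_count n (G t) t)" for t
  define h where "h t' = f t' - (\<Sum>t\<in>D. w t * hom_count n (G t) t')" for t'
  have G_adm: "admissible n d (G t)" if "t \<in> D" for t
    using G that by (auto simp: D_def realises_def)
  have "in_hom_span n d h"
  proof (rule Suc.IH)
    show "h (slot_act g t') = h t'" if "g permutes {..<n}" "t' \<in> slots n d" for g t'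
      using Suc.prems(1)[OF that] hom_count_slot_act[OF admissible_wf[OF G_adm] that(1)]
      by (simp add: h_def)
    show "h t' = 0" if t': "t' \<in> slots n d" "card (slot_support t') > m" for t'
    proof (cases "card (slot_support t') = Suc m")
      case True
      then show ?thesis
        using sum_level_realisations[OF Suc.prems(1) G t'(1)] by (simp add: h_def w_def D_def)
    next
      case False
      have "hom_count n (G t) t' = 0" if "t \<in> D" for t
        using G[of t] that False t'(2) hom_count_support_le[of "G t" _ n t t']
        by (force simp: D_def elim: realisesE)
      then show ?thesis using Suc.prems(2)[OF t'(1)] False t'(2) by (simp add: h_def)
    qed
  qed
  moreover have "in_hom_span n d (\<lambda>t'. \<Sum>t\<in>D. w t * hom_count n (G t) t')"
  proof (rule in_hom_span_sum)
    show "finite D" by (simp add: D_def finite_slots)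
    show "in_hom_span n d (hom_count n (G t))" if "t \<in> D" for t
      by (rule in_hom_span_hom_count[OF G_adm[OF that]])
  qed
  ultimately show ?case
    by (rule in_hom_span_cong[OF in_hom_span_add]) (simp add: h_def)
qed

lemma exists_realisations: "\<exists>G. \<forall>t \<in> slots n d. realises n d (G t) t"
proof -
  have "\<forall>t \<in> slots n d. \<exists>H. realises n d H t"
    using slot_realisation unfolding realises_def by metis
  then show ?thesis by (rule bchoice)
qed

text \<open>Choose a class with nonzero coefficient whose representative \<open>H\<close> has the most nodes, and
  evaluate at the slot of an injective labelling of \<open>H\<close>: by maximality only the class of \<open>H\<close>
  contributes there.\<close>

lemma hom_counts_linearly_independent:
  assumes zero: "\<forall>t\<in>slots n d. (\<Sum>C\<in>Bclasses n d. c C * hom_count n (class_rep n d C) t) = 0"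
  shows "\<forall>C\<in>Bclasses n d. c C = 0"
proof (rule ccontr)
  let ?rep = "class_rep n d" and ?size = "\<lambda>C. card (nodes (class_rep n d C))"
  assume "\<not> (\<forall>C\<in>Bclasses n d. c C = 0)"
  then obtain C0 where C0: "C0 \<in> Bclasses n d" "c C0 \<noteq> 0"
    and max: "\<And>C. C \<in> Bclasses n d \<Longrightarrow> c C \<noteq> 0 \<Longrightarrow> ?size C \<le> ?size C0"
    using ex_has_greatest_nat[of "\<lambda>C. C \<in> Bclasses n d \<and> c C \<noteq> 0" _ ?size "Suc n"]
      class_rep(1) by (fastforce simp: admissible_def less_Suc_eq_le)
  define H where "H = ?rep C0"
  have H: "admissible n d H" "C0 = iso_class H" using class_rep[OF C0(1)] by (simp_all add: H_def)
  define j where "j = restrict (\<lambda>v. v - 1) (nodes H)"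
  have j: "j \<in> labellings n H" "inj_on j (nodes H)"
    using H(1) by (auto simp: j_def labellings_def nodes_def admissible_def inj_on_def)
  define t where "t = slot_of j H"
  have t: "t \<in> slots n d"
    unfolding t_def using H(1) j(1) by (intro slot_of_in_slots) (simp_all add: admissible_def)
  have others: "c C * hom_count n (?rep C) t = 0" if C: "C \<in> Bclasses n d" "C \<noteq> C0" for C
  proof (rule ccontr)
    assume "c C * hom_count n (?rep C) t \<noteq> 0"
    then obtain j' where j': "j' \<in> labellings n (?rep C)" "slot_of j' (?rep C) = t"
      and "?size C \<le> card (nodes H)"
      using max[OF C(1)] by (auto simp: H_def elim: hom_count_nonzeroE)
    then have "mgraph_iso (?rep C) H"
      using mgraph_iso_of_slot_of_eq[OF admissible_reduced[OF H(1)]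
          admissible_reduced[OF class_rep(1)[OF C(1)]] j] by (simp add: t_def)
    then show False
      using iso_class_eq admissible_wf class_rep[OF C(1)] H(2) C(2) by metis
  qed
  have "(\<Sum>C\<in>Bclasses n d. c C * hom_count n (?rep C) t) =
      c C0 * hom_count n H t + (\<Sum>C\<in>Bclasses n d - {C0}. c C * hom_count n (?rep C) t)"
    unfolding H_def by (rule sum.remove[OF finite_Bclasses C0(1)])
  also have "(\<Sum>C\<in>Bclasses n d - {C0}. c C * hom_count n (?rep C) t) = 0"
    by (rule sum.neutral) (use others in blast)
  finally have "(\<Sum>C\<in>Bclasses n d. c C * hom_count n (?rep C) t) = c C0 * hom_count n H t"
    by simp
  then show False
    using zero t C0(2) hom_count_pos[OF j(1) t_def[symmetric]] by simp
qed

lemma PC_poly_map_equivariant: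
  assumes "C \<in> Bclasses n d"
  shows "poly_map n d (PC n C)" and "equivariant n (PC n C)"
  using PC_class_rep[OF assms] poly_map_coeff_map equivariant_coeff_map_iff
    hom_count_slot_act[OF admissible_wf[OF class_rep(1)[OF assms]]] by simp_all

lemma sum_PC: "(\<Sum>C\<in>Bclasses n d. c C * PC n C X i k) =
    coeff_map n d (\<lambda>t. \<Sum>C\<in>Bclasses n d. c C * hom_count n (class_rep n d C) t) X i k"
  by (simp add: PC_class_rep sum_coeff_map[OF finite_Bclasses] cong: sum.cong)

lemma PC_linearly_independent:
  assumes "\<forall>X i k. (\<Sum>C\<in>Bclasses n d. c C * PC n C X i k) = 0"
  shows "\<forall>C\<in>Bclasses n d. c C = 0"
proof (rule hom_counts_linearly_independent)
  have "coeff_map n d (\<lambda>t. \<Sum>C\<in>Bclasses n d. c C * hom_count n (class_rep n d C) t) =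
      coeff_map n d (\<lambda>_. 0)"
    using assms by (simp add: fun_eq_iff sum_PC[symmetric] coeff_map_def)
  then show "\<forall>t\<in>slots n d. (\<Sum>C\<in>Bclasses n d. c C * hom_count n (class_rep n d C) t) = 0"
    by (simp add: coeff_map_eq_iff)
qed

lemma PC_spanning:
  assumes "poly_map n d P" "equivariant n P"
  shows "\<exists>c. \<forall>X i k. P X i k = (\<Sum>C\<in>Bclasses n d. c C * PC n C X i k)"
proof -
  obtain f where f: "P = coeff_map n d f" using assms(1) by (rule poly_mapE)
  obtain G where "\<forall>t \<in> slots n d. realises n d (G t) t" using exists_realisations by blast
  moreover have "f (slot_act g t) = f t" if "g permutes {..<n}" "t \<in> slots n d" for g t
    using assms(2) that unfolding f equivariant_coeff_map_iff by blast
  moreover have "f t = 0" if "t \<in> slots n d" "card (slot_support t) > n" for t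
    using that card_mono[OF finite_lessThan slot_support_subset_lessThan[OF that(1)]] by simp
  ultimately have "in_hom_span n d f" by (intro invariant_in_hom_span) blast+
  then obtain c where "\<forall>t\<in>slots n d. f t = (\<Sum>C\<in>Bclasses n d. c C * hom_count n (class_rep n d C) t)"
    unfolding in_hom_span_def by blast
  then have "P = coeff_map n d (\<lambda>t. \<Sum>C\<in>Bclasses n d. c C * hom_count n (class_rep n d C) t)"
    unfolding f coeff_map_eq_iff by blast
  then show ?thesis by (auto simp: sum_PC)
qed

theorem theorem1:
  fixes n d :: nat
  assumes "n \<ge> 1"
  shows "finite (Bclasses n d) \<and>
    (\<forall>C \<in> Bclasses n d. poly_map n d (PC n C) \<and> equivariant n (PC n C)) \<and>
    (\<forall>c :: mgraph set \<Rightarrow> real.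
        (\<forall>X i k. (\<Sum>C \<in> Bclasses n d. c C * PC n C X i k) = 0) \<longrightarrow>
        (\<forall>C \<in> Bclasses n d. c C = 0)) \<and>
    (\<forall>P. poly_map n d P \<and> equivariant n P \<longrightarrow>
        (\<exists>c :: mgraph set \<Rightarrow> real. \<forall>X i k. P X i k = (\<Sum>C \<in> Bclasses n d. c C * PC n C X i k)))"
  using finite_Bclasses PC_poly_map_equivariant PC_linearly_independent PC_spanning by blast

end
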